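(* Let $f_j(\Delta'_{n,k})$ denote the number of $j$-dimensional faces of the half-open hypersimplex $\Delta'_{n,k}$. Then for all integers $1\le j\le n$, $$ \sum_{k=1}^n f_j(\Delta'_{n,k})=j\cdot 2^{n-j-1}\,\frac{n+j+2}{n+1}\binom{n+1}{j+1}, $$ and for every integer $j\ge1$, with the convention $f_j(\Delta'_{n,k})=0$ when $j>n$, $$ \sum_{n\ge1}\sum_{k=1}^n f_j(\Delta'_{n,k})\,x^n=\frac{j\,x^j(1-x)}{(1-2x)^{j+2}}. $$
   Context: For integers $0<k\le n$, $\Delta_{n,k}=\{(x_1,\ldots,x_n)\in[0,1]^n : k-1\le x_1+\cdots+x_n\le k\}$ (a convex polytope) and the half-open hypersimplex is $\Delta'_{n,k}=\{(x_1,\ldots,x_n)\in[0,1]^n : k-1< x_1+\cdots+x_n\le k\}$. A $j$-face of $\Delta'_{n,k}$ is a set $F\cap\Delta'_{n,k}$ where $F$ is a $j$-dimensional face of $\Delta_{n,k}$ with $F\cap\Delta'_{n,k}\neq\emptyset$; $f_j(\Delta'_{n,k})$ is the number of such sets. *)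

theory Defs
  imports Complex_Main "HOL-Computational_Algebra.Formal_Power_Series"
begin

text \<open>Points of R^n are represented as functions nat \<Rightarrow> real that vanish
  outside the coordinates 0..n-1 (so R^n is a linear subspace of nat \<Rightarrow> real). Convexity, segments, faces and affine dimension
  are written out as in HOL-Analysis (convex, closed_segment, open_segment,
  face_of, aff_dim), since that library requires a euclidean_space type.\<close>

definition hypersimplex :: "nat \<Rightarrow> nat \<Rightarrow> (nat \<Rightarrow> real) set" where
  "hypersimplex n k = {x. (\<forall>i. n \<le> i \<longrightarrow> x i = 0) \<and> (\<forall>i<n. 0 \<le> x i \<and> x i \<le> 1)
      \<and> real k - 1 \<le> (\<Sum>i<n. x i) \<and> (\<Sum>i<n. x i) \<le> real k}"

definition half_open_hypersimplex :: "nat \<Rightarrow> nat \<Rightarrow> (nat \<Rightarrow> real) set" where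
  "half_open_hypersimplex n k = {x. (\<forall>i. n \<le> i \<longrightarrow> x i = 0) \<and> (\<forall>i<n. 0 \<le> x i \<and> x i \<le> 1)
      \<and> real k - 1 < (\<Sum>i<n. x i) \<and> (\<Sum>i<n. x i) \<le> real k}"

definition fconvex :: "(nat \<Rightarrow> real) set \<Rightarrow> bool" where
  "fconvex S \<longleftrightarrow> (\<forall>x\<in>S. \<forall>y\<in>S. \<forall>u::real. 0 \<le> u \<and> u \<le> 1 \<longrightarrow>
      (\<lambda>i. (1 - u) * x i + u * y i) \<in> S)"

definition fclosed_segment :: "(nat \<Rightarrow> real) \<Rightarrow> (nat \<Rightarrow> real) \<Rightarrow> (nat \<Rightarrow> real) set" where
  "fclosed_segment a b = {(\<lambda>i. (1 - u) * a i + u * b i) | u::real. 0 \<le> u \<and> u \<le> 1}"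

definition fopen_segment :: "(nat \<Rightarrow> real) \<Rightarrow> (nat \<Rightarrow> real) \<Rightarrow> (nat \<Rightarrow> real) set" where
  "fopen_segment a b = fclosed_segment a b - {a, b}"

definition fface_of :: "(nat \<Rightarrow> real) set \<Rightarrow> (nat \<Rightarrow> real) set \<Rightarrow> bool" where
  "fface_of T S \<longleftrightarrow> T \<subseteq> S \<and> fconvex T \<and>
     (\<forall>a\<in>S. \<forall>b\<in>S. \<forall>x\<in>T. x \<in> fopen_segment a b \<longrightarrow> a \<in> T \<and> b \<in> T)"

definition aff_indep_pts :: "nat \<Rightarrow> (nat \<Rightarrow> nat \<Rightarrow> real) \<Rightarrow> bool" where
  "aff_indep_pts m p \<longleftrightarrow> (\<forall>c::nat \<Rightarrow> real.
     (\<forall>i. (\<Sum>l\<le>m. c l * p l i) = 0) \<and> (\<Sum>l\<le>m. c l) = 0 \<longrightarrow> (\<forall>l\<le>m. c l = 0))"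

text \<open>A set has affine dimension j iff it contains j+1 but not j+2 affinely
  independent points (the empty set has dimension -1, so never qualifies).\<close>
definition has_aff_dim :: "(nat \<Rightarrow> real) set \<Rightarrow> nat \<Rightarrow> bool" where
  "has_aff_dim F j \<longleftrightarrow> (\<exists>p. (\<forall>l\<le>j. p l \<in> F) \<and> aff_indep_pts j p) \<and>
     \<not> (\<exists>p. (\<forall>l\<le>Suc j. p l \<in> F) \<and> aff_indep_pts (Suc j) p)"

definition f_half_open :: "nat \<Rightarrow> nat \<Rightarrow> nat \<Rightarrow> nat" where
  "f_half_open n k j = card {F \<inter> half_open_hypersimplex n k | F.
      fface_of F (hypersimplex n k) \<and> has_aff_dim F j \<and> F \<inter> half_open_hypersimplex n k \<noteq> {}}"

end

theory Submission
  imports Defs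
begin

text \<open>
  Every nonempty face of \<open>\<Delta>\<^sub>n\<^sub>,\<^sub>k\<close> is cut out by the inequalities that are tight on it. On a
  face meeting \<open>\<Delta>'\<^sub>n\<^sub>,\<^sub>k\<close> the inequality \<open>\<Sum> x\<^sub>i \<ge> k - 1\<close> is not tight, so the face is given by a
  triple \<open>(U, V, t)\<close>: \<open>x\<^sub>i = 1\<close> on \<open>V\<close>, \<open>x\<^sub>i = 0\<close> off \<open>U \<union> V\<close>, and \<open>\<Sum> x\<^sub>i = k\<close> iff \<open>t\<close>.
  Exhibiting explicit affinely independent points, and conversely solving a homogeneous linear
  system, shows that its dimension is \<open>|U| - 1\<close> if \<open>t\<close> and \<open>|U|\<close> otherwise. Such a face meets
  \<open>\<Delta>'\<^sub>n\<^sub>,\<^sub>k\<close> and has exactly these tight inequalities iff \<open>|V| < k < |V| + |U|\<close> (if \<open>t\<close>),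
  resp. \<open>|V| < k \<le> |V| + |U|\<close> (if not). So for fixed \<open>(U, V)\<close> with \<open>|U| \<in> {j, j + 1}\<close> exactly
  \<open>j\<close> values of \<open>k\<close> contribute a \<open>j\<close>-face, and
  \<open>\<Sum>\<^sub>k f\<^sub>j(\<Delta>'\<^sub>n\<^sub>,\<^sub>k) = j (C(n, j+1) 2\<^bsup>n-j-1\<^esup> + C(n, j) 2\<^bsup>n-j\<^esup>)\<close>. The generating function
  follows from \<open>\<Sum>\<^sub>n C(n, m) 2\<^bsup>n-m\<^esup> x\<^sup>n = x\<^sup>m / (1 - 2x)\<^bsup>m+1\<^esup>\<close>.
\<close>

section \<open>Faces of the hypersimplex as sets of tight inequalities\<close>

datatype hs_ineq = Lower nat | Upper nat | Sum_upper | Sum_lower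

definition slack :: "nat \<Rightarrow> nat \<Rightarrow> hs_ineq \<Rightarrow> (nat \<Rightarrow> real) \<Rightarrow> real" where
  "slack n k c x = (case c of Lower i \<Rightarrow> x i | Upper i \<Rightarrow> 1 - x i
     | Sum_upper \<Rightarrow> real k - (\<Sum>i<n. x i) | Sum_lower \<Rightarrow> (\<Sum>i<n. x i) - (real k - 1))"

definition hs_ineqs :: "nat \<Rightarrow> hs_ineq set" where
  "hs_ineqs n = Lower ` {..<n} \<union> Upper ` {..<n} \<union> {Sum_upper, Sum_lower}"

lemma finite_hs_ineqs [simp]: "finite (hs_ineqs n)"
  by (simp add: hs_ineqs_def)

lemma hs_ineqs_cases:
  assumes "c \<in> hs_ineqs n"
  obtains i where "i < n" "c = Lower i" | i where "i < n" "c = Upper i"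
    | "c = Sum_upper" | "c = Sum_lower"
  using assms unfolding hs_ineqs_def by blast

lemma hypersimplex_iff_slack:
  "x \<in> hypersimplex n k \<longleftrightarrow> (\<forall>i. n \<le> i \<longrightarrow> x i = 0) \<and> (\<forall>c\<in>hs_ineqs n. 0 \<le> slack n k c x)"
proof -
  have "(\<forall>c\<in>hs_ineqs n. 0 \<le> slack n k c x) \<longleftrightarrow> (\<forall>i<n. 0 \<le> x i \<and> x i \<le> 1)
          \<and> real k - 1 \<le> (\<Sum>i<n. x i) \<and> (\<Sum>i<n. x i) \<le> real k"
  proof
    assume "\<forall>c\<in>hs_ineqs n. 0 \<le> slack n k c x"
    then have "0 \<le> slack n k (Lower i) x" "0 \<le> slack n k (Upper i) x" if "i < n" for i
      using that by (auto simp: hs_ineqs_def)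
    moreover have "Sum_upper \<in> hs_ineqs n" "Sum_lower \<in> hs_ineqs n"
      by (auto simp: hs_ineqs_def)
    ultimately show "(\<forall>i<n. 0 \<le> x i \<and> x i \<le> 1)
          \<and> real k - 1 \<le> (\<Sum>i<n. x i) \<and> (\<Sum>i<n. x i) \<le> real k"
      using \<open>\<forall>c\<in>hs_ineqs n. 0 \<le> slack n k c x\<close> by (fastforce simp: slack_def)
  qed (auto elim!: hs_ineqs_cases simp: slack_def)
  then show ?thesis
    unfolding hypersimplex_def by auto
qed

lemma half_open_hypersimplex_iff:
  "x \<in> half_open_hypersimplex n k \<longleftrightarrow> x \<in> hypersimplex n k \<and> 0 < slack n k Sum_lower x"
  unfolding hypersimplex_def half_open_hypersimplex_def slack_def by auto

lemma slack_bounds: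
  assumes "x \<in> hypersimplex n k"
  shows "0 \<le> slack n k c x" "slack n k c x \<le> 1"
proof -
  have "0 \<le> x i \<and> x i \<le> 1" for i
    using assms unfolding hypersimplex_def by (cases "i < n") auto
  then show "0 \<le> slack n k c x" "slack n k c x \<le> 1"
    using assms unfolding hypersimplex_def slack_def by (cases c; force)+
qed

lemma slack_affine:
  assumes "a + b = 1"
  shows "slack n k c (\<lambda>i. a * x i + b * y i) = a * slack n k c x + b * slack n k c y"
proof -
  have sum: "(\<Sum>i<n. a * x i + b * y i) = a * (\<Sum>i<n. x i) + b * (\<Sum>i<n. y i)"
    by (simp add: sum.distrib sum_distrib_left)
  have b: "b = 1 - a"
    using assms by simp
  show ?thesis
    unfolding slack_def using sum by (cases c) (auto simp: algebra_simps b)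
qed

lemma hypersimplex_affine_comb:
  assumes "x \<in> hypersimplex n k" "y \<in> hypersimplex n k" "a + b = 1" "0 \<le> a" "0 \<le> b"
  shows "(\<lambda>i. a * x i + b * y i) \<in> hypersimplex n k"
  using assms slack_bounds[OF assms(1)] slack_bounds[OF assms(2)]
  unfolding hypersimplex_iff_slack slack_affine[OF assms(3)] by simp

definition tight_face :: "nat \<Rightarrow> nat \<Rightarrow> hs_ineq set \<Rightarrow> (nat \<Rightarrow> real) set" where
  "tight_face n k T = {x \<in> hypersimplex n k. \<forall>c\<in>T. slack n k c x = 0}"

definition tight_ineqs :: "nat \<Rightarrow> nat \<Rightarrow> (nat \<Rightarrow> real) set \<Rightarrow> hs_ineq set" where
  "tight_ineqs n k F = {c \<in> hs_ineqs n. \<forall>x\<in>F. slack n k c x = 0}"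

lemma tight_face_subset: "tight_face n k T \<subseteq> hypersimplex n k"
  unfolding tight_face_def by auto

lemma fconvex_tight_face: "fconvex (tight_face n k T)"
  unfolding fconvex_def tight_face_def
  using hypersimplex_affine_comb slack_affine by simp

lemma fopen_segmentE:
  assumes "x \<in> fopen_segment a b"
  obtains u where "0 < u" "u < 1" "x = (\<lambda>i. (1 - u) * a i + u * b i)"
proof -
  obtain u where u: "0 \<le> u" "u \<le> 1" "x = (\<lambda>i. (1 - u) * a i + u * b i)" "x \<noteq> a" "x \<noteq> b"
    using assms unfolding fopen_segment_def fclosed_segment_def by auto
  then have "u \<noteq> 0" "u \<noteq> 1"
    by auto
  with u show ?thesis
    by (intro that) auto
qed

lemma fface_of_tight_face: "fface_of (tight_face n k T) (hypersimplex n k)"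
  unfolding fface_of_def
proof (intro conjI tight_face_subset fconvex_tight_face; intro ballI impI)
  fix a b x
  assume a: "a \<in> hypersimplex n k" and b: "b \<in> hypersimplex n k"
    and x: "x \<in> tight_face n k T" and seg: "x \<in> fopen_segment a b"
  obtain u where u: "0 < u" "u < 1" "x = (\<lambda>i. (1 - u) * a i + u * b i)"
    using fopen_segmentE[OF seg] .
  have "slack n k c a = 0 \<and> slack n k c b = 0" if "c \<in> T" for c
  proof -
    have "(1 - u) * slack n k c a + u * slack n k c b = 0"
      using x that u(3) slack_affine[of "1 - u" u] unfolding tight_face_def by simp
    moreover have "0 \<le> slack n k c a" "0 \<le> slack n k c b"
      using slack_bounds a b by auto
    ultimately show ?thesis
      using u by (smt (verit) mult_nonneg_nonneg mult_pos_pos)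
  qed
  then show "a \<in> tight_face n k T \<and> b \<in> tight_face n k T"
    using a b unfolding tight_face_def by auto
qed

lemma exists_point_all_slacks_pos:
  assumes "finite C" "F \<subseteq> hypersimplex n k" "fconvex F" "F \<noteq> {}"
    and "\<forall>c\<in>C. \<exists>w\<in>F. 0 < slack n k c w"
  shows "\<exists>x\<in>F. \<forall>c\<in>C. 0 < slack n k c x"
  using assms(1,5)
proof (induction C rule: finite_induct)
  case empty
  then show ?case
    using assms(4) by auto
next
  case (insert c C)
  then obtain x where x: "x \<in> F" "\<forall>d\<in>C. 0 < slack n k d x"
    by auto
  obtain w where w: "w \<in> F" "0 < slack n k c w"
    using insert.prems by auto
  define m where "m = (\<lambda>i. (1/2) * x i + (1/2::real) * w i)"
  have "m \<in> F"
    using assms(3) x(1) w(1) unfolding fconvex_def m_def by (elim ballE allE[of _ "1/2"]) auto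
  moreover have "0 < slack n k d m" if "d \<in> insert c C" for d
  proof -
    have "0 < slack n k d x \<or> 0 < slack n k d w"
      using that x w by auto
    moreover have "0 \<le> slack n k d x" "0 \<le> slack n k d w"
      using slack_bounds x(1) w(1) assms(2) by blast+
    moreover have "slack n k d m = (1/2) * slack n k d x + (1/2) * slack n k d w"
      unfolding m_def by (rule slack_affine) simp
    ultimately show ?thesis
      by auto
  qed
  ultimately show ?case
    by blast
qed

lemma mem_fopen_segment_extension:
  fixes x y :: "nat \<Rightarrow> real"
  assumes "0 < e" "x \<noteq> y"
  shows "x \<in> fopen_segment y (\<lambda>i. (1 + e) * x i + (- e) * y i)"
proof -
  define z where "z = (\<lambda>i. (1 + e) * x i + (- e) * y i)"
  define u where "u = 1 / (1 + e)"
  have u: "0 \<le> u" "u \<le> 1" "u * (1 + e) = 1"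
    unfolding u_def using assms(1) by auto
  have "(1 - u) * y i + u * z i = (1 - u * (1 + e)) * y i + u * (1 + e) * x i" for i
    by (simp add: z_def algebra_simps)
  then have x_eq: "x = (\<lambda>i. (1 - u) * y i + u * z i)"
    using u(3) by simp
  have "x \<noteq> z"
  proof
    assume "x = z"
    then have "x i = (1 + e) * x i + (- e) * y i" for i
      unfolding z_def by metis
    then have "x = y"
      using assms(1) by (intro ext) (simp add: algebra_simps)
    with assms(2) show False
      by simp
  qed
  then show ?thesis
    using x_eq u assms(2) unfolding z_def[symmetric] fopen_segment_def fclosed_segment_def by auto
qed

lemma extension_mem_hypersimplex:
  assumes x: "x \<in> tight_face n k T" and y: "y \<in> tight_face n k T" and "0 < e"
    and e_le: "\<forall>c\<in>hs_ineqs n - T. e \<le> slack n k c x"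
  shows "(\<lambda>i. (1 + e) * x i + (- e) * y i) \<in> hypersimplex n k"
    (is "?z \<in> _")
  unfolding hypersimplex_iff_slack
proof (intro conjI allI impI ballI)
  have xP: "x \<in> hypersimplex n k" and yP: "y \<in> hypersimplex n k"
    using x y tight_face_subset by blast+
  fix c assume c: "c \<in> hs_ineqs n"
  have slack_z: "slack n k c ?z = (1 + e) * slack n k c x - e * slack n k c y"
    by (subst slack_affine) simp_all
  show "0 \<le> slack n k c ?z"
  proof (cases "c \<in> T")
    case True
    then show ?thesis
      using x y slack_z unfolding tight_face_def by simp
  next
    case False
    then have "e * slack n k c y \<le> e" "e \<le> slack n k c x"
      using e_le c slack_bounds[OF yP] \<open>0 < e\<close> by simp_all
    moreover have "0 \<le> e * slack n k c x"
      using slack_bounds[OF xP] \<open>0 < e\<close> by simp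
    ultimately show ?thesis
      unfolding slack_z by (simp add: algebra_simps)
  qed
next
  fix i assume "n \<le> i"
  then show "?z i = 0"
    using x y unfolding tight_face_def hypersimplex_iff_slack by auto
qed

lemma relint_point_in_open_segment:
  assumes x: "x \<in> tight_face n k T" and y: "y \<in> tight_face n k T" "y \<noteq> x"
    and pos: "\<forall>c\<in>hs_ineqs n - T. 0 < slack n k c x"
  shows "\<exists>z\<in>hypersimplex n k. x \<in> fopen_segment y z"
proof -
  define e where "e = Min (insert 1 ((\<lambda>c. slack n k c x) ` (hs_ineqs n - T)))"
  have "0 < e"
    unfolding e_def using pos by (simp add: Min_gr_iff)
  moreover have "\<forall>c\<in>hs_ineqs n - T. e \<le> slack n k c x"
    unfolding e_def by (auto intro: Min_le)
  ultimately show ?thesis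
    using extension_mem_hypersimplex[OF x y(1)] mem_fopen_segment_extension y(2)[symmetric] by blast
qed

lemma face_eq_tight_face:
  assumes face: "fface_of F (hypersimplex n k)" and "F \<noteq> {}"
  shows "F = tight_face n k (tight_ineqs n k F)"
proof
  show "F \<subseteq> tight_face n k (tight_ineqs n k F)"
    using face unfolding fface_of_def tight_face_def tight_ineqs_def by auto
next
  have FP: "F \<subseteq> hypersimplex n k" and "fconvex F"
    using face unfolding fface_of_def by auto
  have "\<forall>c\<in>hs_ineqs n - tight_ineqs n k F. \<exists>w\<in>F. 0 < slack n k c w"
    using FP slack_bounds unfolding tight_ineqs_def by (force simp: less_le)
  then obtain x where x: "x \<in> F" and pos: "\<forall>c\<in>hs_ineqs n - tight_ineqs n k F. 0 < slack n k c x"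
    using exists_point_all_slacks_pos[of "hs_ineqs n - tight_ineqs n k F" F n k] FP \<open>fconvex F\<close> \<open>F \<noteq> {}\<close> by auto
  show "tight_face n k (tight_ineqs n k F) \<subseteq> F"
  proof
    fix y assume y: "y \<in> tight_face n k (tight_ineqs n k F)"
    show "y \<in> F"
    proof (cases "y = x")
      case False
      have "x \<in> tight_face n k (tight_ineqs n k F)"
        using x FP unfolding tight_face_def tight_ineqs_def by auto
      then obtain z where "z \<in> hypersimplex n k" "x \<in> fopen_segment y z"
        using relint_point_in_open_segment y False pos by blast
      then show ?thesis
        using face x y tight_face_subset unfolding fface_of_def by blast
    qed (use x in simp)
  qed
qed

section \<open>Affine independence\<close>

lemma homogeneous_system_nontrivial_solution:
  fixes a :: "'e \<Rightarrow> 'l \<Rightarrow> 'a::field"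
  assumes "finite E" "finite S" "card E < card S"
  shows "\<exists>c. (\<exists>l\<in>S. c l \<noteq> 0) \<and> (\<forall>e\<in>E. (\<Sum>l\<in>S. a e l * c l) = 0)"
  using assms
proof (induction E arbitrary: S a rule: finite_induct)
  case empty
  then obtain l0 where "l0 \<in> S"
    by fastforce
  then show ?case
    by (intro exI[of _ "\<lambda>l. if l = l0 then 1 else 0"]) auto
next
  case (insert e E)
  show ?case
  proof (cases "\<forall>l\<in>S. a e l = 0")
    case True
    then show ?thesis
      using insert.IH[of S a] insert.prems insert.hyps by auto
  next
    case False
    then obtain p where p: "p \<in> S" "a e p \<noteq> 0"
      by auto
    text \<open>Gaussian elimination: remove the unknown \<open>p\<close> using equation \<open>e\<close>.\<close>
    define a' where "a' = (\<lambda>f l. a f l - a f p * a e l / a e p)"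
    have "finite (S - {p})" "card E < card (S - {p})"
      using insert.prems insert.hyps p(1) by auto
    then obtain c' where c': "\<exists>l\<in>S - {p}. c' l \<noteq> 0" "\<forall>f\<in>E. (\<Sum>l\<in>S - {p}. a' f l * c' l) = 0"
      using insert.IH[of "S - {p}" a'] by blast
    define c where "c = c'(p := - (\<Sum>l\<in>S - {p}. a e l * c' l) / a e p)"
    have split: "(\<Sum>l\<in>S. a f l * c l) = a f p * c p + (\<Sum>l\<in>S - {p}. a f l * c' l)" for f
      using p(1) insert.prems by (simp add: sum.remove c_def)
    have "(\<Sum>l\<in>S. a f l * c l) = 0" if "f \<in> insert e E" for f
    proof (cases "f = e")
      case False
      then have "(\<Sum>l\<in>S - {p}. a f l * c' l) - a f p / a e p * (\<Sum>l\<in>S - {p}. a e l * c' l) = 0"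
        using c'(2) that
        by (simp add: a'_def sum_subtractf sum_distrib_left algebra_simps)
      then show ?thesis
        using split[of f] by (simp add: c_def)
    qed (use split[of e] p(2) in \<open>simp add: c_def\<close>)
    moreover have "\<exists>l\<in>S. c l \<noteq> 0"
      using c'(1) by (auto simp: c_def)
    ultimately show ?thesis
      by blast
  qed
qed

lemma aff_indep_pts_mono:
  assumes "aff_indep_pts m p" "m' \<le> m"
  shows "aff_indep_pts m' p"
  unfolding aff_indep_pts_def
proof (rule allI, rule impI)
  fix c assume c: "(\<forall>i. (\<Sum>l\<le>m'. c l * p l i) = 0) \<and> (\<Sum>l\<le>m'. c l) = 0"
  define c' where "c' l = (if l \<le> m' then c l else 0)" for l
  have extend: "(\<Sum>l\<le>m. c' l * g l) = (\<Sum>l\<le>m'. c l * g l)" for g :: "nat \<Rightarrow> real"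
  proof -
    have "(\<Sum>l\<le>m. c' l * g l) = (\<Sum>l\<in>{..m'}. c' l * g l)"
      using assms(2) by (intro sum.mono_neutral_right) (auto simp: c'_def)
    then show ?thesis
      by (simp add: c'_def)
  qed
  have "\<forall>l\<le>m. c' l = 0"
    using assms(1) c extend[of "\<lambda>_. 1"] extend unfolding aff_indep_pts_def by simp
  then show "\<forall>l\<le>m'. c l = 0"
    using assms(2) by (metis c'_def le_trans)
qed

lemma has_aff_dim_unique:
  assumes "has_aff_dim F j" "has_aff_dim F j'"
  shows "j = j'"
proof -
  have "\<not> j < j'" if dim: "has_aff_dim F j" and dim': "has_aff_dim F j'" for j j'
  proof
    assume "j < j'"
    obtain p where "\<forall>l\<le>j'. p l \<in> F" "aff_indep_pts j' p"
      using dim' unfolding has_aff_dim_def by blast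
    then have "\<forall>l\<le>Suc j. p l \<in> F" "aff_indep_pts (Suc j) p"
      using \<open>j < j'\<close> aff_indep_pts_mono by auto
    then show False
      using dim unfolding has_aff_dim_def by blast
  qed
  then show ?thesis
    using assms by (meson linorder_neqE_nat)
qed

lemma not_aff_indep_if_coords_determined:
  assumes "finite W" "card W < m"
    and det: "\<forall>x\<in>F. \<forall>i. x i = b i + (\<Sum>w\<in>W. a i w * x w)"
  shows "\<not> (\<exists>p. (\<forall>l\<le>m. p l \<in> F) \<and> aff_indep_pts m p)"
proof
  assume "\<exists>p. (\<forall>l\<le>m. p l \<in> F) \<and> aff_indep_pts m p"
  then obtain p where pF: "\<forall>l\<le>m. p l \<in> F" and indep: "aff_indep_pts m p"
    by blast
  define E where "E = insert None (Some ` W)"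
  have "card E < card {..m}"
    using assms(1,2) card_insert_le[of "Some ` W" None] card_image[of Some W]
    unfolding E_def by simp
  then obtain c where c: "\<exists>l\<in>{..m}. c l \<noteq> 0"
    and sol: "\<forall>e\<in>E. (\<Sum>l\<in>{..m}. (case e of None \<Rightarrow> 1 | Some w \<Rightarrow> p l w) * c l) = 0"
    using homogeneous_system_nontrivial_solution[of E "{..m}" "\<lambda>e l. case e of None \<Rightarrow> 1 | Some w \<Rightarrow> p l w"]
      assms(1) unfolding E_def by blast
  have sum_c: "(\<Sum>l\<le>m. c l) = 0" and sum_w: "\<And>w. w \<in> W \<Longrightarrow> (\<Sum>l\<le>m. c l * p l w) = 0"
    using sol unfolding E_def by (auto simp: mult.commute)
  have "(\<Sum>l\<le>m. c l * p l i) = 0" for i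
  proof -
    have "c l * p l i = c l * b i + (\<Sum>w\<in>W. a i w * (c l * p l w))" if "l \<le> m" for l
    proof -
      have "p l i = b i + (\<Sum>w\<in>W. a i w * p l w)"
        using pF det that by blast
      then show ?thesis
        by (simp add: distrib_left sum_distrib_left mult.left_commute)
    qed
    then have "(\<Sum>l\<le>m. c l * p l i) = (\<Sum>l\<le>m. c l * b i + (\<Sum>w\<in>W. a i w * (c l * p l w)))"
      by (intro sum.cong) auto
    also have "\<dots> = (\<Sum>l\<le>m. c l) * b i + (\<Sum>w\<in>W. a i w * (\<Sum>l\<le>m. c l * p l w))"
      by (simp add: sum.distrib sum_distrib_left sum_distrib_right sum.swap[of _ W])
    finally show ?thesis
      using sum_c sum_w by simp
  qed
  then have "\<forall>l\<le>m. c l = 0"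
    using indep sum_c unfolding aff_indep_pts_def by blast
  then show False
    using c by auto
qed

lemma aff_indep_pts_diagonal:
  assumes diff: "\<forall>q<m. p (Suc q) = (\<lambda>i. p 0 i + d q i)"
    and diag: "\<forall>q<m. d q (u q) \<noteq> 0" "\<forall>q<m. \<forall>r<m. r \<noteq> q \<longrightarrow> d r (u q) = 0"
  shows "aff_indep_pts m p"
  unfolding aff_indep_pts_def
proof (rule allI, rule impI)
  fix c assume c: "(\<forall>i. (\<Sum>l\<le>m. c l * p l i) = 0) \<and> (\<Sum>l\<le>m. c l) = 0"
  have "(\<Sum>l\<le>m. c l * p l i) = (\<Sum>l\<le>m. c l) * p 0 i + (\<Sum>q<m. c (Suc q) * d q i)" for i
  proof -
    have "(\<Sum>l\<le>m. c l * p l i) = c 0 * p 0 i + (\<Sum>q<m. c (Suc q) * p 0 i + c (Suc q) * d q i)"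
      using diff by (simp add: sum.atMost_shift algebra_simps)
    also have "\<dots> = (c 0 + (\<Sum>q<m. c (Suc q))) * p 0 i + (\<Sum>q<m. c (Suc q) * d q i)"
      by (simp add: sum.distrib sum_distrib_right distrib_right)
    finally show ?thesis
      by (simp add: sum.atMost_shift)
  qed
  then have lin: "(\<Sum>r<m. c (Suc r) * d r i) = 0" for i
    using c by simp
  have c_Suc: "c (Suc q) = 0" if "q < m" for q
  proof -
    have "(\<Sum>r<m. c (Suc r) * d r (u q)) = c (Suc q) * d q (u q)"
      using that diag(2) by (subst sum.remove[of _ q]) (auto intro!: sum.neutral)
    then show ?thesis
      using lin[of "u q"] diag(1) that by simp
  qed
  have "c 0 = 0"
    using c c_Suc by (simp add: sum.atMost_shift)
  then show "\<forall>l\<le>m. c l = 0"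
    using c_Suc by (metis Suc_le_eq not0_implies_Suc)
qed

section \<open>Faces meeting the half-open hypersimplex\<close>

text \<open>The face on which \<open>x\<^sub>i = 1\<close> for \<open>i \<in> V\<close>, \<open>x\<^sub>i = 0\<close> for \<open>i \<notin> U \<union> V\<close>, and, if \<open>t\<close>,
  \<open>\<Sum> x\<^sub>i = k\<close>; the coordinates in \<open>U\<close> are the free ones.\<close>
definition face_ineqs :: "nat \<Rightarrow> nat set \<Rightarrow> nat set \<Rightarrow> bool \<Rightarrow> hs_ineq set" where
  "face_ineqs n U V t = Lower ` ({..<n} - U - V) \<union> Upper ` V \<union> (if t then {Sum_upper} else {})"

definition hs_face :: "nat \<Rightarrow> nat \<Rightarrow> nat set \<Rightarrow> nat set \<Rightarrow> bool \<Rightarrow> (nat \<Rightarrow> real) set" where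
  "hs_face n k U V t = tight_face n k (face_ineqs n U V t)"

lemma mem_face_ineqs [simp]:
  "Lower i \<in> face_ineqs n U V t \<longleftrightarrow> i < n \<and> i \<notin> U \<and> i \<notin> V"
  "Upper i \<in> face_ineqs n U V t \<longleftrightarrow> i \<in> V"
  "Sum_upper \<in> face_ineqs n U V t \<longleftrightarrow> t"
  "Sum_lower \<notin> face_ineqs n U V t"
  unfolding face_ineqs_def by auto

lemma face_ineqs_subset: "V \<subseteq> {..<n} \<Longrightarrow> face_ineqs n U V t \<subseteq> hs_ineqs n"
  unfolding face_ineqs_def hs_ineqs_def by auto

lemma face_ineqs_inj:
  assumes "U \<subseteq> {..<n}" "U \<inter> V = {}" "U' \<subseteq> {..<n}" "U' \<inter> V' = {}"
    and "face_ineqs n U V t = face_ineqs n U' V' t'"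
  shows "U = U'" "V = V'" "t = t'"
proof -
  have "Upper i \<in> face_ineqs n U V t \<longleftrightarrow> Upper i \<in> face_ineqs n U' V' t'"
    "Lower i \<in> face_ineqs n U V t \<longleftrightarrow> Lower i \<in> face_ineqs n U' V' t'" for i
    using assms(5) by simp_all
  then have "i \<in> V \<longleftrightarrow> i \<in> V'" "i < n \<and> i \<notin> U \<and> i \<notin> V \<longleftrightarrow> i < n \<and> i \<notin> U' \<and> i \<notin> V'" for i
    by simp_all
  then show "V = V'" "U = U'"
    using assms(1-4) by blast+
  show "t = t'"
    using assms(5) mem_face_ineqs(3) by metis
qed

lemma sum_lessThan_split:
  fixes x :: "nat \<Rightarrow> real"
  assumes "U \<subseteq> {..<n}" "V \<subseteq> {..<n}" "U \<inter> V = {}"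
    and "\<forall>i\<in>{..<n} - U - V. x i = 0" "\<forall>i\<in>V. x i = 1"
  shows "(\<Sum>i<n. x i) = real (card V) + (\<Sum>i\<in>U. x i)"
proof -
  have "(\<Sum>i<n. x i) = (\<Sum>i\<in>{..<n} - U. x i) + (\<Sum>i\<in>U. x i)"
    using sum.subset_diff[OF assms(1)] by simp
  moreover have "(\<Sum>i\<in>{..<n} - U. x i) = (\<Sum>i\<in>{..<n} - U - V. x i) + (\<Sum>i\<in>V. x i)"
    using assms(2,3) by (subst sum.subset_diff[of V]) auto
  ultimately show ?thesis
    using assms(4,5) by simp
qed

lemma mem_hs_face_iff:
  assumes UV: "U \<subseteq> {..<n}" "V \<subseteq> {..<n}" "U \<inter> V = {}"
  shows "x \<in> hs_face n k U V t \<longleftrightarrow>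
    (\<forall>i. n \<le> i \<longrightarrow> x i = 0) \<and> (\<forall>i\<in>U. 0 \<le> x i \<and> x i \<le> 1) \<and>
    (\<forall>i\<in>{..<n} - U - V. x i = 0) \<and> (\<forall>i\<in>V. x i = 1) \<and>
    real k - 1 \<le> real (card V) + (\<Sum>i\<in>U. x i) \<and> real (card V) + (\<Sum>i\<in>U. x i) \<le> real k \<and>
    (t \<longrightarrow> real (card V) + (\<Sum>i\<in>U. x i) = real k)" (is "?L \<longleftrightarrow> ?R")
proof
  assume ?L
  then have xP: "x \<in> hypersimplex n k" and tight: "\<forall>c\<in>face_ineqs n U V t. slack n k c x = 0"
    unfolding hs_face_def tight_face_def by auto
  have zero: "\<forall>i\<in>{..<n} - U - V. x i = 0" and one: "\<forall>i\<in>V. x i = 1"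
    using tight[rule_format, of "Lower _"] tight[rule_format, of "Upper _"]
    by (auto simp: slack_def)
  moreover have "t \<longrightarrow> (\<Sum>i<n. x i) = real k"
    using tight[rule_format, of Sum_upper] by (simp add: slack_def)
  ultimately show ?R
    using xP sum_lessThan_split[OF UV zero one] UV(1) unfolding hypersimplex_def by (auto simp: subset_iff)
next
  assume R: ?R
  then have sum: "(\<Sum>i<n. x i) = real (card V) + (\<Sum>i\<in>U. x i)"
    using sum_lessThan_split[OF UV] by blast
  have "0 \<le> x i \<and> x i \<le> 1" if "i < n" for i
    using R that by (cases "i \<in> U"; cases "i \<in> V") auto
  then have "x \<in> hypersimplex n k"
    unfolding hypersimplex_def using R sum by auto
  moreover have "\<forall>c\<in>face_ineqs n U V t. slack n k c x = 0"
    unfolding face_ineqs_def slack_def using R sum by auto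
  ultimately show ?L
    unfolding hs_face_def tight_face_def by auto
qed

lemma hs_face_coord_outside:
  assumes "U \<subseteq> {..<n}" "V \<subseteq> {..<n}" "U \<inter> V = {}" "x \<in> hs_face n k U V t" "i \<notin> U"
  shows "x i = (if i \<in> V then 1 else 0)"
  using assms unfolding mem_hs_face_iff[OF assms(1-3)] by (cases "i < n") auto

lemma not_aff_indep_hs_face:
  assumes UV: "U \<subseteq> {..<n}" "V \<subseteq> {..<n}" "U \<inter> V = {}" and "card U < m"
  shows "\<not> (\<exists>p. (\<forall>l\<le>m. p l \<in> hs_face n k U V t) \<and> aff_indep_pts m p)"
proof (rule not_aff_indep_if_coords_determined)
  show "finite U" "card U < m"
    using finite_subset[OF UV(1)] assms(4) by auto
  have "x i = (if i \<in> V then 1 else 0) + (\<Sum>w\<in>U. of_bool (i = w) * x w)"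
    if "x \<in> hs_face n k U V t" for x i
    using hs_face_coord_outside[OF UV that] \<open>finite U\<close> UV(3) by (cases "i \<in> U") auto
  then show "\<forall>x\<in>hs_face n k U V t. \<forall>i. x i = (if i \<in> V then 1 else 0)
      + (\<Sum>w\<in>U. of_bool (i = w) * x w)"
    by blast
qed

text \<open>With \<open>\<Sum> x\<^sub>i = k\<close> imposed, one free coordinate \<open>w\<^sub>0 \<in> U\<close> is determined by the others.\<close>
lemma not_aff_indep_hs_face_Sum_upper:
  assumes UV: "U \<subseteq> {..<n}" "V \<subseteq> {..<n}" "U \<inter> V = {}" and "w0 \<in> U" "card U \<le> m"
  shows "\<not> (\<exists>p. (\<forall>l\<le>m. p l \<in> hs_face n k U V True) \<and> aff_indep_pts m p)"
proof (rule not_aff_indep_if_coords_determined)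
  have "finite U"
    using finite_subset[OF UV(1)] by simp
  moreover have "0 < card U"
    using \<open>finite U\<close> assms(4) card_gt_0_iff by blast
  ultimately show "finite (U - {w0})" "card (U - {w0}) < m"
    using assms(4,5) by (auto simp: card_Diff_singleton)
  define b where "b i = (if i = w0 then real k - real (card V) else if i \<in> V then 1 else 0)" for i
  define a where "a i w = (if i = w0 then - 1 else of_bool (i = w) :: real)" for i w
  have "x i = b i + (\<Sum>w\<in>U - {w0}. a i w * x w)" if x: "x \<in> hs_face n k U V True" for x i
  proof -
    have "real (card V) + (\<Sum>w\<in>U. x w) = real k"
      using x unfolding mem_hs_face_iff[OF UV] by blast
    then have "x w0 = real k - real (card V) - (\<Sum>w\<in>U - {w0}. x w)"
      using \<open>finite U\<close> assms(4) by (simp add: sum.remove)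
    moreover have "i \<notin> U \<Longrightarrow> x i = (if i \<in> V then 1 else 0)"
      using hs_face_coord_outside[OF UV x] .
    ultimately show ?thesis
      using \<open>finite U\<close> assms(4) UV(3) unfolding a_def b_def
      by (cases "i = w0"; cases "i \<in> U") (auto simp: sum_negf)
  qed
  then show "\<forall>x\<in>hs_face n k U V True. \<forall>i. x i = b i + (\<Sum>w\<in>U - {w0}. a i w * x w)"
    by blast
qed

definition admissible :: "nat \<Rightarrow> nat \<Rightarrow> nat set \<Rightarrow> nat set \<Rightarrow> bool \<Rightarrow> bool" where
  "admissible n k U V t \<longleftrightarrow> U \<subseteq> {..<n} \<and> V \<subseteq> {..<n} \<and> U \<inter> V = {} \<and> card V < k \<and>
     (if t then k < card V + card U else k \<le> card V + card U)"

definition face_dim :: "nat set \<Rightarrow> bool \<Rightarrow> nat" where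
  "face_dim U t = (if t then card U - 1 else card U)"

text \<open>A relative interior point of \<open>hs_face n k U V t\<close> that lies in the half-open hypersimplex.\<close>
definition centre_value :: "nat \<Rightarrow> nat set \<Rightarrow> nat set \<Rightarrow> bool \<Rightarrow> real" where
  "centre_value k U V t = (real k - real (card V) - (if t then 0 else 1/2)) / real (card U)"

definition centre_point :: "nat \<Rightarrow> nat set \<Rightarrow> nat set \<Rightarrow> bool \<Rightarrow> nat \<Rightarrow> real" where
  "centre_point k U V t i = (if i \<in> V then 1 else if i \<in> U then centre_value k U V t else 0)"

lemma admissible_centre_value:
  assumes "admissible n k U V t"
  shows "finite U" "U \<noteq> {}" "0 < centre_value k U V t" "centre_value k U V t < 1"
    "real (card U) * centre_value k U V t = real k - real (card V) - (if t then 0 else 1/2)"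
proof -
  show fin: "finite U"
    using assms finite_subset unfolding admissible_def by blast
  have pos: "0 < card U"
    using assms unfolding admissible_def by (auto split: if_splits)
  then show "U \<noteq> {}"
    by auto
  show "real (card U) * centre_value k U V t = real k - real (card V) - (if t then 0 else 1/2)"
    unfolding centre_value_def using pos by simp
  have "0 < real k - real (card V) - (if t then 0 else 1/2)"
    "real k - real (card V) - (if t then 0 else 1/2) < real (card U)"
    using assms unfolding admissible_def by (auto split: if_splits)
  then show "0 < centre_value k U V t" "centre_value k U V t < 1"
    unfolding centre_value_def using pos by (simp_all add: divide_less_eq)
qed

lemma sum_centre_point:
  assumes "admissible n k U V t"
  shows "(\<Sum>i<n. centre_point k U V t i) = real k - (if t then 0 else 1/2)"
proof -
  have UV: "U \<subseteq> {..<n}" "V \<subseteq> {..<n}" "U \<inter> V = {}"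
    using assms unfolding admissible_def by auto
  have "(\<Sum>i<n. centre_point k U V t i) = real (card V) + (\<Sum>i\<in>U. centre_point k U V t i)"
    by (rule sum_lessThan_split[OF UV]) (auto simp: centre_point_def)
  also have "(\<Sum>i\<in>U. centre_point k U V t i) = (\<Sum>i\<in>U. centre_value k U V t)"
    using UV(3) by (intro sum.cong) (auto simp: centre_point_def)
  finally show ?thesis
    using admissible_centre_value(5)[OF assms] by simp
qed

lemma slack_centre_point:
  assumes "admissible n k U V t" "c \<in> hs_ineqs n"
  shows "c \<in> face_ineqs n U V t \<Longrightarrow> slack n k c (centre_point k U V t) = 0"
    and "c \<notin> face_ineqs n U V t \<Longrightarrow> 0 < slack n k c (centre_point k U V t)"
proof -
  have "U \<inter> V = {}"
    using assms unfolding admissible_def by auto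
  note facts = admissible_centre_value[OF assms(1)] sum_centre_point[OF assms(1)] this
  from assms(2) have "(c \<in> face_ineqs n U V t \<longrightarrow> slack n k c (centre_point k U V t) = 0) \<and>
      (c \<notin> face_ineqs n U V t \<longrightarrow> 0 < slack n k c (centre_point k U V t))"
    by (cases rule: hs_ineqs_cases; cases t) (use facts in \<open>auto simp: slack_def centre_point_def\<close>)
  then show "c \<in> face_ineqs n U V t \<Longrightarrow> slack n k c (centre_point k U V t) = 0"
    and "c \<notin> face_ineqs n U V t \<Longrightarrow> 0 < slack n k c (centre_point k U V t)"
    by auto
qed

lemma centre_point_mem:
  assumes "admissible n k U V t"
  shows "centre_point k U V t \<in> hs_face n k U V t"
    and "centre_point k U V t \<in> half_open_hypersimplex n k"
proof -
  have UV: "U \<subseteq> {..<n}" "V \<subseteq> {..<n}"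
    using assms unfolding admissible_def by auto
  have nonneg: "0 \<le> slack n k c (centre_point k U V t)" if "c \<in> hs_ineqs n" for c
    using slack_centre_point[OF assms that] by (cases "c \<in> face_ineqs n U V t") auto
  have P: "centre_point k U V t \<in> hypersimplex n k"
    unfolding hypersimplex_iff_slack using nonneg UV by (auto simp: centre_point_def)
  then show "centre_point k U V t \<in> hs_face n k U V t"
    unfolding hs_face_def tight_face_def
    using slack_centre_point(1)[OF assms] face_ineqs_subset[OF UV(2)] by blast
  have "Sum_lower \<in> hs_ineqs n"
    by (simp add: hs_ineqs_def)
  then show "centre_point k U V t \<in> half_open_hypersimplex n k"
    unfolding half_open_hypersimplex_iff using P slack_centre_point(2)[OF assms] by simp
qed

lemma tight_ineqs_eq_face_ineqs:
  assumes "admissible n k U V t" "centre_point k U V t \<in> S" "S \<subseteq> hs_face n k U V t"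
  shows "tight_ineqs n k S = face_ineqs n U V t"
proof
  have "V \<subseteq> {..<n}"
    using assms unfolding admissible_def by auto
  then show "face_ineqs n U V t \<subseteq> tight_ineqs n k S"
    using assms(3) face_ineqs_subset unfolding tight_ineqs_def hs_face_def tight_face_def by blast
  show "tight_ineqs n k S \<subseteq> face_ineqs n U V t"
    using assms(2) slack_centre_point(2)[OF assms(1)] unfolding tight_ineqs_def by fastforce
qed

lemma aff_indep_in_hs_face:
  assumes adm: "admissible n k U V False"
  shows "\<exists>p. (\<forall>l\<le>card U. p l \<in> hs_face n k U V False) \<and> aff_indep_pts (card U) p"
proof -
  have UV: "U \<subseteq> {..<n}" "V \<subseteq> {..<n}" "U \<inter> V = {}"
    using adm unfolding admissible_def by auto
  note cv = admissible_centre_value[OF adm]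
  define d where "d = card U"
  define v where "v = centre_value k U V False"
  define e where "e = 1 / (2 * real d)"
  have d: "0 < real d" "real d * v = real k - real (card V) - 1/2" "real d * e = 1/2"
    using cv unfolding d_def v_def e_def by (simp_all add: card_gt_0_iff)
  have "k \<le> card V + d"
    using adm unfolding admissible_def d_def by auto
  then have "real d * (v + e) \<le> real d * 1"
    using d by (simp add: algebra_simps)
  then have v_e: "0 < v" "0 < e" "e \<le> 1/2" "v + e \<le> 1"
    using d cv(3) unfolding v_def e_def by (auto simp: mult_le_cancel_left_pos)
  obtain h where h: "bij_betw h {..<d} U"
    using ex_bij_betw_nat_finite[OF cv(1)] unfolding d_def atLeast0LessThan by blast
  then have hU: "h q \<in> U" if "q < d" for q
    using that by (simp add: bij_betw_apply)
  have h_eq: "h q = h r \<longleftrightarrow> q = r" if "q < d" "r < d" for q r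
    using h that unfolding bij_betw_def inj_on_def by auto
  define p where "p l i = centre_point k U V False i + (if l \<noteq> 0 \<and> i = h (l - 1) then e else 0)"
    for l i
  have "p l \<in> hs_face n k U V False" if "l \<le> d" for l
  proof -
    have "l \<noteq> 0 \<Longrightarrow> h (l - 1) \<in> U"
      using that hU by simp
    moreover have "(\<Sum>i\<in>U. p l i) = real d * v + (if l \<noteq> 0 then e else 0)"
      using calculation UV(3) cv(1) by (cases "l = 0") (simp_all add: p_def sum.distrib
          centre_point_def v_def d_def disjoint_iff sum.delta')
    ultimately show ?thesis
      unfolding mem_hs_face_iff[OF UV] using UV d v_e
      by (auto simp: p_def centre_point_def v_def subset_iff)
  qed
  moreover have "aff_indep_pts d p"
    by (rule aff_indep_pts_diagonal[where d = "\<lambda>q i. if i = h q then e else 0" and u = h])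
      (use v_e h_eq in \<open>auto simp: p_def\<close>)
  ultimately show ?thesis
    unfolding d_def by blast
qed

lemma aff_indep_in_hs_face_Sum_upper:
  assumes adm: "admissible n k U V True"
  shows "\<exists>p. (\<forall>l\<le>card U - 1. p l \<in> hs_face n k U V True) \<and> aff_indep_pts (card U - 1) p"
proof -
  have UV: "U \<subseteq> {..<n}" "V \<subseteq> {..<n}" "U \<inter> V = {}"
    using adm unfolding admissible_def by auto
  note cv = admissible_centre_value[OF adm]
  define d where "d = card U"
  define v where "v = centre_value k U V True"
  define e where "e = 1 / real d"
  have d: "0 < real d" "real d * v = real k - real (card V)" "real d * e = 1"
    using cv unfolding d_def v_def e_def by (simp_all add: card_gt_0_iff)
  have "card V + 1 \<le> k" "k + 1 \<le> card V + d"
    using adm unfolding admissible_def d_def by auto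
  then have "real d * e \<le> real d * v" "real d * (v + e) \<le> real d * 1"
    using d by (simp_all add: algebra_simps)
  then have v_e: "0 < e" "e \<le> v" "v + e \<le> 1"
    using d(1) by (simp_all add: e_def mult_le_cancel_left_pos divide_le_eq mult.commute)
  obtain h where h: "bij_betw h {..<d} U"
    using ex_bij_betw_nat_finite[OF cv(1)] unfolding d_def atLeast0LessThan by blast
  then have hU: "h q \<in> U" if "q < d" for q
    using that by (simp add: bij_betw_apply)
  have h_eq: "h q = h r \<longleftrightarrow> q = r" if "q < d" "r < d" for q r
    using h that unfolding bij_betw_def inj_on_def by auto
  text \<open>Move the amount \<open>e\<close> from the free coordinate \<open>h 0\<close> to \<open>h l\<close>; this keeps the sum \<open>k\<close>.\<close>
  define p where "p l i = centre_point k U V True i + (if l \<noteq> 0 \<and> i = h l then e else 0)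
      - (if l \<noteq> 0 \<and> i = h 0 then e else 0)" for l i
  have "p l \<in> hs_face n k U V True" if "l \<le> d - 1" for l
  proof -
    have l: "h l \<in> U" "h 0 \<in> U" "l \<noteq> 0 \<Longrightarrow> h l \<noteq> h 0"
      using that d(1) hU h_eq[of l 0] by auto
    then have "(\<Sum>i\<in>U. p l i) = real d * v"
      using UV(3) cv(1) by (cases "l = 0") (simp_all add: p_def sum.distrib sum_subtractf
          centre_point_def v_def d_def disjoint_iff sum.delta')
    then show ?thesis
      unfolding mem_hs_face_iff[OF UV] using UV d v_e l
      by (auto simp: p_def centre_point_def v_def subset_iff)
  qed
  moreover have "aff_indep_pts (d - 1) p"
    by (rule aff_indep_pts_diagonal[where u = "\<lambda>q. h (Suc q)"
          and d = "\<lambda>q i. (if i = h (Suc q) then e else 0) - (if i = h 0 then e else 0)"])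
      (use v_e h_eq in \<open>auto simp: p_def\<close>)
  ultimately show ?thesis
    unfolding d_def by blast
qed

lemma has_aff_dim_hs_face:
  assumes adm: "admissible n k U V t"
  shows "has_aff_dim (hs_face n k U V t) (face_dim U t)"
proof -
  have UV: "U \<subseteq> {..<n}" "V \<subseteq> {..<n}" "U \<inter> V = {}"
    using adm unfolding admissible_def by auto
  show ?thesis
  proof (cases t)
    case True
    obtain w0 where "w0 \<in> U"
      using admissible_centre_value(2)[OF adm] by blast
    then show ?thesis
      using True adm aff_indep_in_hs_face_Sum_upper not_aff_indep_hs_face_Sum_upper[OF UV, of w0]
      unfolding has_aff_dim_def face_dim_def by auto
  next
    case False
    then show ?thesis
      using adm aff_indep_in_hs_face not_aff_indep_hs_face[OF UV]
      unfolding has_aff_dim_def face_dim_def by auto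
  qed
qed

lemma face_eq_hs_face:
  assumes face: "fface_of F (hypersimplex n k)" and "F \<inter> half_open_hypersimplex n k \<noteq> {}"
  obtains U V t where "U \<subseteq> {..<n}" "V \<subseteq> {..<n}" "U \<inter> V = {}"
    "F = hs_face n k U V t" "tight_ineqs n k F = face_ineqs n U V t"
proof -
  let ?T = "tight_ineqs n k F"
  obtain y where y: "y \<in> F" "y \<in> half_open_hypersimplex n k"
    using assms(2) by blast
  define V where "V = {i. i < n \<and> Upper i \<in> ?T}"
  define U where "U = {i. i < n \<and> Lower i \<notin> ?T \<and> Upper i \<notin> ?T}"
  have "Sum_lower \<notin> ?T"
  proof
    assume "Sum_lower \<in> ?T"
    then have "slack n k Sum_lower y = 0"
      using y(1) unfolding tight_ineqs_def by blast
    with y(2) show False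
      unfolding half_open_hypersimplex_iff by simp
  qed
  moreover have "Upper i \<notin> ?T" if "Lower i \<in> ?T" for i
    using y(1) that unfolding tight_ineqs_def slack_def by fastforce
  moreover have "?T \<subseteq> hs_ineqs n"
    unfolding tight_ineqs_def by auto
  ultimately have T: "?T = face_ineqs n U V (Sum_upper \<in> ?T)"
    unfolding face_ineqs_def U_def V_def hs_ineqs_def by auto
  have "F = hs_face n k U V (Sum_upper \<in> ?T)"
    using face_eq_tight_face[OF face] y(1) T unfolding hs_face_def by auto
  moreover have "U \<subseteq> {..<n}" "V \<subseteq> {..<n}" "U \<inter> V = {}"
    unfolding U_def V_def by auto
  ultimately show ?thesis
    using that T by blast
qed

lemma hs_face_sum_free_coords:
  assumes UV: "U \<subseteq> {..<n}" "V \<subseteq> {..<n}" "U \<inter> V = {}" and x: "x \<in> hs_face n k U V t"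
  shows "(\<Sum>i<n. x i) = real (card V) + (\<Sum>i\<in>U. x i)"
    and "0 \<le> (\<Sum>i\<in>U. x i)" "(\<Sum>i\<in>U. x i) \<le> real (card U)"
proof -
  note x_iff = x[unfolded mem_hs_face_iff[OF UV]]
  show "(\<Sum>i<n. x i) = real (card V) + (\<Sum>i\<in>U. x i)"
    using sum_lessThan_split[OF UV] x_iff by blast
  show "0 \<le> (\<Sum>i\<in>U. x i)"
    using x_iff by (intro sum_nonneg) auto
  have "(\<Sum>i\<in>U. x i) \<le> (\<Sum>i\<in>U. 1)"
    using x_iff by (intro sum_mono) auto
  then show "(\<Sum>i\<in>U. x i) \<le> real (card U)"
    by simp
qed

lemma admissible_if_tight_ineqs:
  assumes UV: "U \<subseteq> {..<n}" "V \<subseteq> {..<n}" "U \<inter> V = {}" and "U \<noteq> {}"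
    and tight: "tight_ineqs n k (hs_face n k U V t) = face_ineqs n U V t"
    and "hs_face n k U V t \<inter> half_open_hypersimplex n k \<noteq> {}"
  shows "admissible n k U V t"
proof -
  let ?F = "hs_face n k U V t"
  note face_iff = mem_hs_face_iff[OF UV] and sums = hs_face_sum_free_coords[OF UV]
  obtain i0 where i0: "i0 \<in> U" "i0 \<notin> V"
    using assms(3,4) by blast
  then have "Lower i0 \<in> hs_ineqs n" "Upper i0 \<in> hs_ineqs n" "Sum_upper \<in> hs_ineqs n"
    using UV(1) by (auto simp: hs_ineqs_def)
  then have not_tight: "c \<notin> face_ineqs n U V t \<Longrightarrow> c \<in> {Lower i0, Upper i0, Sum_upper} \<Longrightarrow>
      \<exists>x\<in>?F. slack n k c x \<noteq> 0" for c
    using tight unfolding tight_ineqs_def by auto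
  show ?thesis
  proof (cases t)
    case True
    obtain x0 where x0: "x0 \<in> ?F" "x0 i0 \<noteq> 0"
      using not_tight[of "Lower i0"] i0 by (auto simp: slack_def)
    obtain x1 where x1: "x1 \<in> ?F" "x1 i0 \<noteq> 1"
      using not_tight[of "Upper i0"] i0 by (auto simp: slack_def)
    have fin: "finite U"
      using finite_subset[OF UV(1)] by simp
    have "0 < (\<Sum>i\<in>U. x0 i)"
      using x0 i0 fin unfolding face_iff by (intro sum_pos2[of U i0]) (auto simp: less_le)
    moreover have "(\<Sum>i\<in>U. x1 i) < (\<Sum>i\<in>U. 1)"
      using x1 i0 fin unfolding face_iff by (intro sum_strict_mono_ex1) (auto simp: less_le)
    moreover have "real (card V) + (\<Sum>i\<in>U. x i) = real k" if "x \<in> ?F" for x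
      using that True unfolding face_iff by blast
    ultimately have "real (card V) < real k" "real k < real (card V) + real (card U)"
      using x0(1) x1(1) by fastforce+
    then show ?thesis
      using UV True unfolding admissible_def by simp
  next
    case False
    obtain x where x: "x \<in> ?F" "slack n k Sum_upper x \<noteq> 0"
      using not_tight[of Sum_upper] False by auto
    obtain y where y: "y \<in> ?F" "y \<in> half_open_hypersimplex n k"
      using assms(6) by blast
    have "real (card V) + (\<Sum>i\<in>U. x i) < real k"
      using x face_iff sums(1)[OF x(1)] by (simp add: slack_def)
    moreover have "real k - 1 < real (card V) + (\<Sum>i\<in>U. y i)"
      using y sums(1)[OF y(1)] unfolding half_open_hypersimplex_iff by (simp add: slack_def)
    ultimately have "real (card V) < real k" "real k < real (card V) + real (card U) + 1"
      using sums(2)[OF x(1)] sums(3)[OF y(1)] by linarith+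
    then show ?thesis
      using UV False unfolding admissible_def by simp
  qed
qed

lemma admissible_of_face:
  assumes face: "fface_of F (hypersimplex n k)" and dim: "has_aff_dim F j" and "1 \<le> j"
    and FH: "F \<inter> half_open_hypersimplex n k \<noteq> {}"
  shows "\<exists>U V t. admissible n k U V t \<and> face_dim U t = j \<and> F = hs_face n k U V t"
proof -
  obtain U V t where UV: "U \<subseteq> {..<n}" "V \<subseteq> {..<n}" "U \<inter> V = {}"
    and F: "F = hs_face n k U V t" and tight: "tight_ineqs n k F = face_ineqs n U V t"
    using face_eq_hs_face[OF face FH] by blast
  have "U \<noteq> {}"
  proof
    assume "U = {}"
    then have "card U < j"
      using \<open>1 \<le> j\<close> by simp
    from not_aff_indep_hs_face[OF UV this] show False
      using dim F unfolding has_aff_dim_def by blast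
  qed
  then have "admissible n k U V t"
    using admissible_if_tight_ineqs[OF UV] tight F FH by simp
  moreover from this have "face_dim U t = j"
    using has_aff_dim_unique has_aff_dim_hs_face dim F by blast
  ultimately show ?thesis
    using F by blast
qed

section \<open>Counting faces\<close>

definition face_params :: "nat \<Rightarrow> nat \<Rightarrow> nat \<Rightarrow> (nat set \<times> nat set \<times> bool) set" where
  "face_params n k j = {(U, V, t). admissible n k U V t \<and> face_dim U t = j}"

lemma half_open_faces_eq_image:
  assumes "1 \<le> j"
  shows "{F \<inter> half_open_hypersimplex n k | F. fface_of F (hypersimplex n k) \<and> has_aff_dim F j
            \<and> F \<inter> half_open_hypersimplex n k \<noteq> {}}
       = (\<lambda>(U, V, t). hs_face n k U V t \<inter> half_open_hypersimplex n k) ` face_params n k j"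
    (is "?faces = ?image")
proof
  show "?faces \<subseteq> ?image"
    using admissible_of_face[OF _ _ assms] unfolding face_params_def by fast
  show "?image \<subseteq> ?faces"
  proof
    fix S assume "S \<in> ?image"
    then obtain U V t where adm: "admissible n k U V t" and "face_dim U t = j"
      and S: "S = hs_face n k U V t \<inter> half_open_hypersimplex n k"
      unfolding face_params_def by auto
    then have "has_aff_dim (hs_face n k U V t) j"
      using has_aff_dim_hs_face by blast
    moreover have "hs_face n k U V t \<inter> half_open_hypersimplex n k \<noteq> {}"
      using centre_point_mem[OF adm] by blast
    ultimately show "S \<in> ?faces"
      using S fface_of_tight_face unfolding hs_face_def by blast
  qed
qed

lemma inj_on_half_open_face:
  "inj_on (\<lambda>(U, V, t). hs_face n k U V t \<inter> half_open_hypersimplex n k) (face_params n k j)"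
proof (rule inj_onI)
  fix p p' assume "p \<in> face_params n k j" "p' \<in> face_params n k j"
    and eq: "(\<lambda>(U, V, t). hs_face n k U V t \<inter> half_open_hypersimplex n k) p
      = (\<lambda>(U, V, t). hs_face n k U V t \<inter> half_open_hypersimplex n k) p'"
  then obtain U V t U' V' t' where p: "p = (U, V, t)" "p' = (U', V', t')"
    and adm: "admissible n k U V t" "admissible n k U' V' t'"
    unfolding face_params_def by auto
  have "tight_ineqs n k (hs_face n k U V t \<inter> half_open_hypersimplex n k) = face_ineqs n U V t"
    by (rule tight_ineqs_eq_face_ineqs[OF adm(1)]) (use centre_point_mem[OF adm(1)] in auto)
  moreover have "tight_ineqs n k (hs_face n k U' V' t' \<inter> half_open_hypersimplex n k)
      = face_ineqs n U' V' t'"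
    by (rule tight_ineqs_eq_face_ineqs[OF adm(2)]) (use centre_point_mem[OF adm(2)] in auto)
  ultimately have "face_ineqs n U V t = face_ineqs n U' V' t'"
    using eq p by simp
  moreover have "U \<subseteq> {..<n}" "U \<inter> V = {}" "U' \<subseteq> {..<n}" "U' \<inter> V' = {}"
    using adm unfolding admissible_def by auto
  ultimately have "U = U'" "V = V'" "t = t'"
    using face_ineqs_inj by metis+
  then show "p = p'"
    using p by simp
qed

lemma f_half_open_eq_card_face_params:
  assumes "1 \<le> j"
  shows "f_half_open n k j = card (face_params n k j)"
  unfolding f_half_open_def half_open_faces_eq_image[OF assms]
  using card_image[OF inj_on_half_open_face] by simp

definition subset_pairs :: "nat \<Rightarrow> nat \<Rightarrow> (nat set \<times> nat set) set" where
  "subset_pairs n d = (SIGMA U:{U. U \<subseteq> {..<n} \<and> card U = d}. Pow ({..<n} - U))"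

lemma finite_subset_pairs: "finite (subset_pairs n d)"
  unfolding subset_pairs_def by (rule finite_SigmaI) auto

lemma card_subset_pairs: "card (subset_pairs n d) = (n choose d) * 2 ^ (n - d)"
proof -
  have "card (subset_pairs n d) = (\<Sum>U\<in>{U. U \<subseteq> {..<n} \<and> card U = d}. card (Pow ({..<n} - U)))"
    unfolding subset_pairs_def by (rule card_SigmaI) auto
  also have "\<dots> = (\<Sum>U\<in>{U. U \<subseteq> {..<n} \<and> card U = d}. 2 ^ (n - d))"
    by (intro sum.cong) (auto simp: card_Pow card_Diff_subset finite_subset)
  also have "\<dots> = (n choose d) * 2 ^ (n - d)"
    using n_subsets[of "{..<n}" d] by simp
  finally show ?thesis .
qed

lemma card_face_params:
  "card (face_params n k j) =
     card {p \<in> subset_pairs n (Suc j). card (snd p) < k \<and> k \<le> card (snd p) + j}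
     + card {p \<in> subset_pairs n j. card (snd p) < k \<and> k \<le> card (snd p) + j}"
proof -
  let ?A = "{p \<in> subset_pairs n (Suc j). card (snd p) < k \<and> k \<le> card (snd p) + j}"
  let ?B = "{p \<in> subset_pairs n j. card (snd p) < k \<and> k \<le> card (snd p) + j}"
  let ?f = "\<lambda>(U, V). (U, V, True)" and ?g = "\<lambda>(U, V). (U, V, False)"
  have "face_params n k j = ?f ` ?A \<union> ?g ` ?B"
    unfolding face_params_def admissible_def face_dim_def subset_pairs_def
    by (auto simp: image_iff split: if_splits)
  moreover have "card (?f ` ?A \<union> ?g ` ?B) = card (?f ` ?A) + card (?g ` ?B)"
    using finite_subset_pairs by (intro card_Un_disjoint) auto
  moreover have "card (?f ` ?A) = card ?A" "card (?g ` ?B) = card ?B"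
    by (rule card_image, force simp: inj_on_def)+
  ultimately show ?thesis
    by simp
qed

lemma sum_card_window:
  assumes "finite A" "\<forall>a\<in>A. g a + j \<le> n"
  shows "(\<Sum>k=1..n. card {a\<in>A. g a < k \<and> k \<le> g a + j}) = j * card A"
proof -
  have "(\<Sum>k=1..n. card {a\<in>A. g a < k \<and> k \<le> g a + j})
      = (\<Sum>k=1..n. \<Sum>a\<in>A. of_bool (g a < k \<and> k \<le> g a + j))"
    using assms(1) by (simp add: Int_def conj_commute)
  also have "\<dots> = (\<Sum>a\<in>A. \<Sum>k=1..n. of_bool (g a < k \<and> k \<le> g a + j))"
    by (rule sum.swap)
  also have "\<dots> = (\<Sum>a\<in>A. j)"
  proof (rule sum.cong)
    fix a assume "a \<in> A"
    then have "{1..n} \<inter> {k. g a < k \<and> k \<le> g a + j} = {Suc (g a)..g a + j}"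
      using assms(2) by auto
    then show "(\<Sum>k=1..n. of_bool (g a < k \<and> k \<le> g a + j)) = j"
      by simp
  qed simp
  finally show ?thesis
    by simp
qed

lemma sum_card_window_subset_pairs:
  assumes "j \<le> d"
  shows "(\<Sum>k=1..n. card {p \<in> subset_pairs n d. card (snd p) < k \<and> k \<le> card (snd p) + j})
      = j * ((n choose d) * 2 ^ (n - d))"
proof -
  have "card (snd p) + j \<le> n" if p_mem: "p \<in> subset_pairs n d" for p
  proof -
    obtain U V where p: "p = (U, V)" and U: "U \<subseteq> {..<n}" "card U = d" and V: "V \<subseteq> {..<n} - U"
      using p_mem unfolding subset_pairs_def by auto
    have "card V \<le> card ({..<n} - U)"
      using V by (intro card_mono) auto
    also have "\<dots> = n - d"
      using U finite_subset[OF U(1)] by (simp add: card_Diff_subset)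
    moreover have "d \<le> n"
      using U card_mono[OF finite_lessThan U(1)] by simp
    ultimately show ?thesis
      using p assms by simp
  qed
  then show ?thesis
    using sum_card_window[where A = "subset_pairs n d" and g = "\<lambda>p. card (snd p)"]
      finite_subset_pairs card_subset_pairs
    by simp
qed

lemma sum_f_half_open:
  assumes "1 \<le> j"
  shows "(\<Sum>k=1..n. f_half_open n k j)
      = j * ((n choose Suc j) * 2 ^ (n - Suc j)) + j * ((n choose j) * 2 ^ (n - j))"
proof -
  have "(\<Sum>k=1..n. f_half_open n k j)
      = (\<Sum>k=1..n. card {p \<in> subset_pairs n (Suc j). card (snd p) < k \<and> k \<le> card (snd p) + j})
      + (\<Sum>k=1..n. card {p \<in> subset_pairs n j. card (snd p) < k \<and> k \<le> card (snd p) + j})"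
    unfolding f_half_open_eq_card_face_params[OF assms] card_face_params by (rule sum.distrib)
  then show ?thesis
    by (simp only: sum_card_window_subset_pairs le_refl le_SucI)
qed

section \<open>The closed form and the generating function\<close>

lemma sum_f_half_open_closed_form:
  assumes "1 \<le> j" "j \<le> n"
  shows "real (j * ((n choose Suc j) * 2 ^ (n - Suc j)) + j * ((n choose j) * 2 ^ (n - j)))
     = real j * (2::real) powi (int n - int j - 1) * (real n + real j + 2) / (real n + 1)
       * real ((n + 1) choose (j + 1))"
proof (cases "j = n")
  case True
  have "real n * (1/2) * (real n + real n + 2) / (real n + 1) = real n"
    by (simp add: field_simps)
  then show ?thesis
    using True by (simp add: power_int_def)
next
  case False
  define m where "m = n - Suc j"
  have m: "n - j = Suc m" "int n - int j - 1 = int m"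
    using False assms unfolding m_def by auto
  define a where "a = real (n choose j)"
  define b where "b = real (n choose Suc j)"
  define c where "c = real (Suc n choose Suc j)"
  have "c = a + b"
    unfolding a_def b_def c_def by simp
  moreover have "(real n + 1) * a = c * (real j + 1)"
    using Suc_times_binomial_eq[of n j] unfolding a_def c_def
    by (metis add.commute of_nat_Suc of_nat_mult)
  ultimately have key: "(b + 2 * a) * (real n + 1) = (real n + real j + 2) * c"
    by (simp add: algebra_simps)
  have "real (j * ((n choose Suc j) * 2 ^ (n - Suc j)) + j * ((n choose j) * 2 ^ (n - j)))
      = real j * 2 ^ m * (b + 2 * a)"
    unfolding a_def b_def m_def[symmetric] m(1) by (simp add: algebra_simps)
  also have "\<dots> = real j * 2 ^ m * ((b + 2 * a) * (real n + 1)) / (real n + 1)"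
    by simp
  finally show ?thesis
    unfolding key c_def using m(2) by (simp add: power_int_def)
qed

definition binomial_pow2_fps :: "nat \<Rightarrow> real fps" where
  "binomial_pow2_fps m = Abs_fps (\<lambda>n. real (n choose m) * 2 ^ (n - m))"

lemma binomial_pow2_fps_0_times: "binomial_pow2_fps 0 * (1 - 2 * fps_X) = 1"
proof -
  have "binomial_pow2_fps 0 = 1 + fps_const 2 * (fps_X * binomial_pow2_fps 0)"
  proof (rule fps_ext)
    fix n
    show "fps_nth (binomial_pow2_fps 0) n = fps_nth (1 + fps_const 2 * (fps_X * binomial_pow2_fps 0)) n"
      by (cases n) (simp_all add: binomial_pow2_fps_def)
  qed
  then show ?thesis
    by (simp add: algebra_simps numeral_fps_const)
qed

lemma binomial_pow2_fps_Suc_times: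
  "binomial_pow2_fps (Suc m) * (1 - 2 * fps_X) = fps_X * binomial_pow2_fps m"
proof -
  have "binomial_pow2_fps (Suc m) = fps_X * binomial_pow2_fps m
      + fps_const 2 * (fps_X * binomial_pow2_fps (Suc m))"
  proof (rule fps_ext)
    fix n
    show "fps_nth (binomial_pow2_fps (Suc m)) n
        = fps_nth (fps_X * binomial_pow2_fps m + fps_const 2 * (fps_X * binomial_pow2_fps (Suc m))) n"
    proof (cases n)
      case (Suc n')
      have "real (n' choose Suc m) * 2 ^ (n' - m) = 2 * (real (n' choose Suc m) * 2 ^ (n' - Suc m))"
        by (cases "Suc m \<le> n'") (simp_all add: Suc_diff_Suc binomial_eq_0 flip: power_Suc)
      then show ?thesis
        using Suc by (simp add: binomial_pow2_fps_def algebra_simps)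
    qed (simp add: binomial_pow2_fps_def)
  qed
  then show ?thesis
    by (simp add: algebra_simps numeral_fps_const)
qed

lemma binomial_pow2_fps_times_power:
  "binomial_pow2_fps m * (1 - 2 * fps_X) ^ Suc m = fps_X ^ m"
proof (induction m)
  case 0
  then show ?case
    using binomial_pow2_fps_0_times by simp
next
  case (Suc m)
  have "binomial_pow2_fps (Suc m) * (1 - 2 * fps_X) ^ Suc (Suc m)
      = (binomial_pow2_fps (Suc m) * (1 - 2 * fps_X)) * (1 - 2 * fps_X) ^ Suc m"
    by (simp only: power_Suc mult_ac)
  also have "\<dots> = fps_X * (binomial_pow2_fps m * (1 - 2 * fps_X) ^ Suc m)"
    by (simp only: binomial_pow2_fps_Suc_times mult.assoc)
  also have "\<dots> = fps_X ^ Suc m"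
    using Suc.IH by simp
  finally show ?case .
qed

lemma fps_sum_f_half_open:
  assumes "1 \<le> j"
  shows "Abs_fps (\<lambda>n. real (\<Sum>k=1..n. if j \<le> n then f_half_open n k j else 0))
    = fps_const (real j) * (binomial_pow2_fps (Suc j) + binomial_pow2_fps j)"
proof (rule fps_ext)
  fix n
  show "fps_nth (Abs_fps (\<lambda>n. real (\<Sum>k=1..n. if j \<le> n then f_half_open n k j else 0))) n
    = fps_nth (fps_const (real j) * (binomial_pow2_fps (Suc j) + binomial_pow2_fps j)) n"
  proof (cases "j \<le> n")
    case True
    have "real (\<Sum>k=1..n. f_half_open n k j) = real j * (real (n choose Suc j) * 2 ^ (n - Suc j))
        + real j * (real (n choose j) * 2 ^ (n - j))"
      using sum_f_half_open[OF assms, of n] by simp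
    then show ?thesis
      using True by (simp add: binomial_pow2_fps_def algebra_simps)
  next
    case False
    then have "n choose j = 0" "n choose Suc j = 0"
      by simp_all
    with False show ?thesis
      by (simp add: binomial_pow2_fps_def del: binomial_eq_0_iff)
  qed
qed

lemma generating_function_f_half_open:
  assumes "1 \<le> j"
  shows "Abs_fps (\<lambda>n. real (\<Sum>k=1..n. if j \<le> n then f_half_open n k j else 0))
    = fps_const (real j) * fps_X ^ j * (1 - fps_X) / (1 - 2 * fps_X) ^ (j + 2)"
proof -
  define Q :: "real fps" where "Q = (1 - 2 * fps_X) ^ (j + 2)"
  have "fps_const (real j) * (binomial_pow2_fps (Suc j) + binomial_pow2_fps j) * Q
      = fps_const (real j) * (binomial_pow2_fps (Suc j) * Q + binomial_pow2_fps j * Q)"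
    by (simp add: algebra_simps)
  also have "binomial_pow2_fps (Suc j) * Q = fps_X ^ Suc j"
    unfolding Q_def using binomial_pow2_fps_times_power[of "Suc j"] by simp
  also have "binomial_pow2_fps j * Q = (binomial_pow2_fps j * (1 - 2 * fps_X) ^ Suc j) * (1 - 2 * fps_X)"
    unfolding Q_def by (simp add: mult_ac)
  also have "\<dots> = fps_X ^ j * (1 - 2 * fps_X)"
    using binomial_pow2_fps_times_power[of j] by simp
  also have "fps_const (real j) * (fps_X ^ Suc j + fps_X ^ j * (1 - 2 * fps_X))
      = fps_const (real j) * fps_X ^ j * (1 - fps_X)"
    by (simp add: algebra_simps)
  finally have times_Q: "fps_const (real j) * (binomial_pow2_fps (Suc j) + binomial_pow2_fps j) * Q
      = fps_const (real j) * fps_X ^ j * (1 - fps_X)" .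
  have "(1 - 2 * fps_X :: real fps) \<noteq> 0"
  proof
    assume "(1 - 2 * fps_X :: real fps) = 0"
    then have "fps_nth (1 - 2 * fps_X :: real fps) 0 = 0"
      by simp
    then show False
      by simp
  qed
  then have "Q \<noteq> 0"
    unfolding Q_def by simp
  then show ?thesis
    unfolding fps_sum_f_half_open[OF assms] times_Q[symmetric] Q_def[symmetric] by simp
qed

theorem theorem2p3:
  shows "(\<forall>n j::nat. 1 \<le> j \<and> j \<le> n \<longrightarrow>
            real (\<Sum>k=1..n. f_half_open n k j)
              = real j * (2::real) powi (int n - int j - 1) * (real n + real j + 2) / (real n + 1)
                * real ((n + 1) choose (j + 1)))
       \<and> (\<forall>j::nat. 1 \<le> j \<longrightarrow>
            Abs_fps (\<lambda>n. real (\<Sum>k=1..n. if j \<le> n then f_half_open n k j else 0))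
              = fps_const (real j) * fps_X ^ j * (1 - fps_X) / (1 - 2 * fps_X) ^ (j + 2))"
proof (intro conjI allI impI)
  fix n j :: nat
  assume "1 \<le> j \<and> j \<le> n"
  then show "real (\<Sum>k=1..n. f_half_open n k j)
      = real j * (2::real) powi (int n - int j - 1) * (real n + real j + 2) / (real n + 1)
        * real ((n + 1) choose (j + 1))"
    using sum_f_half_open[of j n] sum_f_half_open_closed_form[of j n] by simp
qed (rule generating_function_f_half_open)

end
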